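(* Let $\Xi\subset\mathbb{F}^2$ be a finite set of distinct points, $\prec$ any term order on $\mathbb{F}[x,y]$, and $\Xi'\subset\Xi$ an $\mathcal{A}'$-cartesian subset for a lower set $\mathcal{A}'$. Then $\mathcal{A}'=\mathrm{N}_\prec(\Xi')\subset\mathrm{N}_\prec(\Xi)$; equivalently, $\{x^iy^j:(i,j)\in\mathcal{A}'\}$ equals the Gröbner escalier of $\mathcal{I}(\Xi')$ w.r.t. $\prec$ and is contained in the Gröbner escalier of $\mathcal{I}(\Xi)$ w.r.t. $\prec$.
   Context: $\mathbb{F}$ is a field. A finite set $\mathcal{A}\subset\mathbb{N}_0^2$ is a lower set if with each $(\alpha_1,\alpha_2)$ it contains all $(\alpha_1',\alpha_2')\in\mathbb{N}_0^2$ with $\alpha_1'\le\alpha_1,\alpha_2'\le\alpha_2$. A finite set $\Xi'$ of distinct points is $\mathcal{A}$-cartesian if $\Xi'=\{(x_i,y_j):(i,j)\in\mathcal{A}\}$ with pairwise distinct $x_i$ and pairwise distinct $y_j$. For a finite point set $\Xi$, $\mathcal{I}(\Xi)\subset\mathbb{F}[x,y]$ is the ideal of polynomials vanishing on $\Xi$; its Gröbner escalier w.r.t. $\prec$ is the set of monomials not divisible by the leading monomial (w.r.t. $\prec$) of any nonzero element of $\mathcal{I}(\Xi)$, and $\mathrm{N}_\prec(\Xi)=\{(i,j)\in\mathbb{N}_0^2: x^iy^j \text{ is in this escalier}\}$. *)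

theory Defs
  imports Main "HOL-Library.Poly_Mapping"
begin

text \<open>Bivariate polynomials over a field: finitely supported coefficient maps from
exponent pairs (i,j) (standing for the monomial x^i y^j) to coefficients.\<close>
type_synonym 'a bipoly = "(nat \<times> nat) \<Rightarrow>\<^sub>0 'a"

definition bi_eval :: "'a::comm_ring_1 bipoly \<Rightarrow> 'a \<times> 'a \<Rightarrow> 'a" where
  "bi_eval p pt = (\<Sum>m\<in>Poly_Mapping.keys p. Poly_Mapping.lookup p m * fst pt ^ fst m * snd pt ^ snd m)"

definition term_order :: "(nat \<times> nat \<Rightarrow> nat \<times> nat \<Rightarrow> bool) \<Rightarrow> bool" where
  "term_order le \<longleftrightarrow>
     (\<forall>a. le a a) \<and>
     (\<forall>a b. le a b \<and> le b a \<longrightarrow> a = b) \<and>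
     (\<forall>a b c. le a b \<and> le b c \<longrightarrow> le a c) \<and>
     (\<forall>a b. le a b \<or> le b a) \<and>
     (\<forall>a. le (0,0) a) \<and>
     (\<forall>a1 a2 b1 b2 c1 c2. le (a1,a2) (b1,b2) \<longrightarrow> le (a1+c1, a2+c2) (b1+c1, b2+c2))"

definition lead_mon :: "(nat \<times> nat \<Rightarrow> nat \<times> nat \<Rightarrow> bool) \<Rightarrow> 'a::zero bipoly \<Rightarrow> nat \<times> nat" where
  "lead_mon le p = (THE m. m \<in> Poly_Mapping.keys p \<and> (\<forall>k\<in>Poly_Mapping.keys p. le k m))"

definition mon_dvd :: "nat \<times> nat \<Rightarrow> nat \<times> nat \<Rightarrow> bool" where
  "mon_dvd a b \<longleftrightarrow> fst a \<le> fst b \<and> snd a \<le> snd b"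

definition van_ideal :: "('a::comm_ring_1 \<times> 'a) set \<Rightarrow> 'a bipoly set" where
  "van_ideal Xi = {p. \<forall>pt\<in>Xi. bi_eval p pt = 0}"

definition escalier :: "(nat \<times> nat \<Rightarrow> nat \<times> nat \<Rightarrow> bool) \<Rightarrow> ('a::comm_ring_1 \<times> 'a) set \<Rightarrow> (nat \<times> nat) set" where
  "escalier le Xi = {ij. \<forall>p\<in>van_ideal Xi. p \<noteq> 0 \<longrightarrow> \<not> mon_dvd (lead_mon le p) ij}"

definition lower_set :: "(nat \<times> nat) set \<Rightarrow> bool" where
  "lower_set A \<longleftrightarrow> finite A \<and>
     (\<forall>a1 a2 b1 b2. (a1, a2) \<in> A \<and> b1 \<le> a1 \<and> b2 \<le> a2 \<longrightarrow> (b1, b2) \<in> A)"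

definition cartesian :: "(nat \<times> nat) set \<Rightarrow> ('a \<times> 'a) set \<Rightarrow> bool" where
  "cartesian A Xi \<longleftrightarrow> (\<exists>x y :: nat \<Rightarrow> 'a.
      inj_on x (fst ` A) \<and> inj_on y (snd ` A) \<and>
      Xi = {(x i, y j) | i j. (i, j) \<in> A})"

end

theory Submission
  imports Defs "HOL-Computational_Algebra.Polynomial"
begin

(*
  We show
  escalier Xi' = A' by proving both inclusions, and then use that the escalier is
  antitone in the point set (a larger set has a smaller vanishing ideal).

  * escalier Xi' \<subseteq> A': if (i,j) \<notin> A', then every point (x k, y l) of Xi' has k < i or
    l < j, so the product (X - x 0)...(X - x (i-1)) (Y - y 0)...(Y - y (j-1)) vanishes
    on Xi'.  All its monomials divide x^i y^j, hence its leading monomial is (i,j).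
  * A' \<subseteq> escalier Xi': suppose p vanishes on Xi' with leading monomial (a,b) dividing
    some element of A'; then (a,b) \<in> A'.  Since x 0, ..., x a are distinct there are
    weights c with \<Sum>k c k * x k ^ s = [s = a] for s \<le> a (the top divided difference),
    similarly d for y.  The functional \<Sum>k\<Sum>l c k * d l * p(x k, y l) vanishes (all nodes
    lie in Xi'), but evaluates to the leading coefficient of p, since every other
    monomial of p has x-degree < a or y-degree < b.
*)

lemma term_orderD:
  assumes "term_order le"
  shows to_refl: "le a a"
    and to_antisym: "le a b \<Longrightarrow> le b a \<Longrightarrow> a = b"
    and to_trans: "le a b \<Longrightarrow> le b c \<Longrightarrow> le a c"
    and to_total: "le a b \<or> le b a"
    and to_zero: "le (0,0) a"
    and to_mono: "le (a1,a2) (b1,b2) \<Longrightarrow> le (a1+c1, a2+c2) (b1+c1, b2+c2)"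
  using assms unfolding term_order_def by blast+

lemma mon_dvd_imp_le:
  assumes "term_order le" "mon_dvd a b"
  shows "le a b"
proof -
  obtain a1 a2 b1 b2 where ab: "a = (a1,a2)" "b = (b1,b2)" by (cases a, cases b)
  have "le (0,0) (b1-a1, b2-a2)" using assms(1) by (rule to_zero)
  then have "le (0+a1, 0+a2) (b1-a1+a1, b2-a2+a2)" by (rule to_mono[OF assms(1)])
  then show ?thesis using assms(2) ab by (simp add: mon_dvd_def)
qed

lemma term_order_max_exists:
  assumes "term_order le" "finite S" "S \<noteq> {}"
  shows "\<exists>m\<in>S. \<forall>k\<in>S. le k m"
  using assms(2,3)
proof (induction S rule: finite_ne_induct)
  case (singleton x)
  then show ?case using to_refl[OF assms(1)] by simp
next
  case (insert x F)
  then obtain m where m: "m \<in> F" "\<forall>k\<in>F. le k m" by blast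
  show ?case
  proof (cases "le x m")
    case True
    then show ?thesis using m by auto
  next
    case False
    then have "le m x" using to_total[OF assms(1)] by blast
    then have "\<forall>k\<in>insert x F. le k x"
      using m to_refl[OF assms(1)] to_trans[OF assms(1)] by blast
    then show ?thesis by blast
  qed
qed

lemma lead_mon_eqI:
  assumes "term_order le" "m \<in> Poly_Mapping.keys p" "\<forall>k\<in>Poly_Mapping.keys p. le k m"
  shows "lead_mon le p = m"
  unfolding lead_mon_def
proof (rule the_equality)
  show "m \<in> Poly_Mapping.keys p \<and> (\<forall>k\<in>Poly_Mapping.keys p. le k m)" using assms by blast
next
  fix m' assume "m' \<in> Poly_Mapping.keys p \<and> (\<forall>k\<in>Poly_Mapping.keys p. le k m')"
  then show "m' = m" using assms to_antisym[OF assms(1), of m' m] by blast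
qed

lemma lead_mon_max:
  assumes "term_order le" "p \<noteq> 0"
  shows "lead_mon le p \<in> Poly_Mapping.keys p"
    and "k \<in> Poly_Mapping.keys p \<Longrightarrow> le k (lead_mon le p)"
proof -
  obtain m where m: "m \<in> Poly_Mapping.keys p" "\<forall>k\<in>Poly_Mapping.keys p. le k m"
    using term_order_max_exists[OF assms(1), of "Poly_Mapping.keys p"] assms(2) by auto
  then have "lead_mon le p = m" by (rule lead_mon_eqI[OF assms(1)])
  then show "lead_mon le p \<in> Poly_Mapping.keys p" "k \<in> Poly_Mapping.keys p \<Longrightarrow> le k (lead_mon le p)"
    using m by auto
qed

text \<open>Induction on n, removing the node x 0 by synthetic division.\<close>
lemma divided_difference_exists:
  fixes x :: "nat \<Rightarrow> 'a::field"
  shows "inj_on x {..n} \<Longrightarrow>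
    \<exists>c. \<forall>f. degree f \<le> n \<longrightarrow> (\<Sum>k\<le>n. c k * poly f (x k)) = coeff f n"
proof (induction n arbitrary: x)
  case 0
  show ?case
  proof (intro exI[of _ "\<lambda>_. 1"] allI impI)
    fix f :: "'a poly" assume "degree f \<le> 0"
    then show "(\<Sum>k\<le>0. 1 * poly f (x k)) = coeff f 0"
      by (simp add: poly_altdef)
  qed
next
  case (Suc n)
  let ?x' = "\<lambda>k. x (Suc k)"
  have "inj_on ?x' {..n}" using Suc.prems by (auto simp: inj_on_def)
  then obtain c' where c': "\<And>f. degree f \<le> n \<Longrightarrow> (\<Sum>k\<le>n. c' k * poly f (?x' k)) = coeff f n"
    using Suc.IH by blast
  have nodes_distinct: "x (Suc k) - x 0 \<noteq> 0" if "k \<le> n" for k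
    using Suc.prems that by (auto simp: inj_on_def)
  define c where "c = (\<lambda>k. case k of 0 \<Rightarrow> - (\<Sum>k\<le>n. c' k / (x (Suc k) - x 0))
      | Suc k \<Rightarrow> c' k / (x (Suc k) - x 0))"
  show ?case
  proof (intro exI[of _ c] allI impI)
    fix f :: "'a poly" assume df: "degree f \<le> Suc n"
    define q where "q = synthetic_div f (x 0)"
    have f_eq: "[:-(x 0), 1:] * q + [:poly f (x 0):] = f"
      unfolding q_def by (rule synthetic_div_correct')
    have dq: "degree q \<le> n" unfolding q_def using df by (simp add: degree_synthetic_div)
    have "coeff f (Suc n) = coeff ([:-(x 0), 1:] * q + [:poly f (x 0):]) (Suc n)"
      using f_eq by simp
    also have "\<dots> = coeff q n - x 0 * coeff q (Suc n)"
      by (simp add: mult_pCons_left coeff_pCons)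
    also have "coeff q (Suc n) = 0" using dq by (simp add: coeff_eq_0)
    finally have top_coeff: "coeff f (Suc n) = coeff q n" by simp
    have poly_q: "poly q (x (Suc k)) = (poly f (x (Suc k)) - poly f (x 0)) / (x (Suc k) - x 0)"
      if "k \<le> n" for k
    proof -
      have "poly f (x (Suc k)) = (x (Suc k) - x 0) * poly q (x (Suc k)) + poly f (x 0)"
        by (subst f_eq[symmetric]) (simp add: algebra_simps)
      then show ?thesis using nodes_distinct[OF that] by (simp add: field_simps)
    qed
    have "(\<Sum>k\<le>Suc n. c k * poly f (x k))
        = c 0 * poly f (x 0) + (\<Sum>k\<le>n. c (Suc k) * poly f (x (Suc k)))"
      by (subst sum.atMost_Suc_shift) simp
    also have "\<dots> = (\<Sum>k\<le>n. c' k * ((poly f (x (Suc k)) - poly f (x 0)) / (x (Suc k) - x 0)))"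
      by (simp add: c_def sum_distrib_right sum_subtractf diff_divide_distrib
          right_diff_distrib algebra_simps sum_distrib_left)
    also have "\<dots> = (\<Sum>k\<le>n. c' k * poly q (?x' k))"
      by (rule sum.cong) (auto simp: poly_q)
    also have "\<dots> = coeff f (Suc n)" using c'[OF dq] top_coeff by simp
    finally show "(\<Sum>k\<le>Suc n. c k * poly f (x k)) = coeff f (Suc n)" .
  qed
qed

lemma power_dual_weights:
  fixes x :: "nat \<Rightarrow> 'a::field"
  assumes "inj_on x {..n}"
  shows "\<exists>c. \<forall>s\<le>n. (\<Sum>k\<le>n. c k * x k ^ s) = (if s = n then 1 else 0)"
proof -
  obtain c where c: "\<And>f. degree f \<le> n \<Longrightarrow> (\<Sum>k\<le>n. c k * poly f (x k)) = coeff f n"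
    using divided_difference_exists[OF assms] by blast
  show ?thesis
  proof (intro exI[of _ c] allI impI)
    fix s assume "s \<le> n"
    then have "degree (monom (1::'a) s) \<le> n" by (simp add: degree_monom_eq)
    from c[OF this] show "(\<Sum>k\<le>n. c k * x k ^ s) = (if s = n then 1 else 0)"
      by (simp add: poly_monom)
  qed
qed

text \<open>The product f(X) g(Y) of two univariate polynomials as a bivariate polynomial.\<close>
definition bip :: "'a::comm_ring_1 poly \<Rightarrow> 'a poly \<Rightarrow> 'a bipoly" where
  "bip f g = Abs_poly_mapping (\<lambda>(a,b). coeff f a * coeff g b)"

lemma lookup_bip: "Poly_Mapping.lookup (bip f g) = (\<lambda>(a,b). coeff f a * coeff g b)"
proof -
  have "{m. (\<lambda>(a,b). coeff f a * coeff g b) m \<noteq> 0} \<subseteq> {..degree f} \<times> {..degree g}"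
    by (auto intro: le_degree)
  then have "finite {m. (\<lambda>(a,b). coeff f a * coeff g b) m \<noteq> 0}"
    by (rule finite_subset) simp
  then show ?thesis unfolding bip_def by simp
qed

lemma keys_bip: "Poly_Mapping.keys (bip f g) \<subseteq> {..degree f} \<times> {..degree g}"
  by (auto simp: in_keys_iff lookup_bip intro: le_degree)

lemma bi_eval_bip: "bi_eval (bip f g) (u,v) = poly f u * poly g v"
proof -
  have "bi_eval (bip f g) (u,v) = (\<Sum>m\<in>{..degree f} \<times> {..degree g}.
      Poly_Mapping.lookup (bip f g) m * u ^ fst m * v ^ snd m)"
    unfolding bi_eval_def fst_conv snd_conv
    by (rule sum.mono_neutral_left) (auto simp: keys_bip in_keys_iff)
  also have "\<dots> = (\<Sum>a\<le>degree f. \<Sum>b\<le>degree g. (coeff f a * u ^ a) * (coeff g b * v ^ b))"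
    by (subst sum.cartesian_product) (simp add: lookup_bip mult_ac case_prod_beta)
  also have "\<dots> = poly f u * poly g v"
    by (simp add: poly_altdef sum_product)
  finally show ?thesis .
qed

lemma grid_functional_bi_eval:
  fixes p :: "'a::comm_ring_1 bipoly"
  shows "(\<Sum>k\<in>K. \<Sum>l\<in>L. c k * d l * bi_eval p (x k, y l))
    = (\<Sum>m\<in>Poly_Mapping.keys p. Poly_Mapping.lookup p m
          * (\<Sum>k\<in>K. c k * x k ^ fst m) * (\<Sum>l\<in>L. d l * y l ^ snd m))"
proof -
  have "(\<Sum>k\<in>K. \<Sum>l\<in>L. c k * d l * bi_eval p (x k, y l))
      = (\<Sum>k\<in>K. \<Sum>l\<in>L. \<Sum>m\<in>Poly_Mapping.keys p.
           Poly_Mapping.lookup p m * (c k * x k ^ fst m) * (d l * y l ^ snd m))"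
    unfolding bi_eval_def fst_conv snd_conv sum_distrib_left
    by (intro sum.cong refl) (simp add: mult_ac)
  also have "\<dots> = (\<Sum>m\<in>Poly_Mapping.keys p. \<Sum>k\<in>K. \<Sum>l\<in>L.
           Poly_Mapping.lookup p m * (c k * x k ^ fst m) * (d l * y l ^ snd m))"
    by (subst sum.swap, subst (2) sum.swap) simp
  also have "\<dots> = (\<Sum>m\<in>Poly_Mapping.keys p. Poly_Mapping.lookup p m
          * (\<Sum>k\<in>K. c k * x k ^ fst m) * (\<Sum>l\<in>L. d l * y l ^ snd m))"
  proof (rule sum.cong[OF refl])
    fix m
    have "Poly_Mapping.lookup p m * (\<Sum>k\<in>K. c k * x k ^ fst m) * (\<Sum>l\<in>L. d l * y l ^ snd m)
        = (\<Sum>k\<in>K. Poly_Mapping.lookup p m * (c k * x k ^ fst m)) * (\<Sum>l\<in>L. d l * y l ^ snd m)"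
      by (simp only: sum_distrib_left)
    also have "\<dots> = (\<Sum>k\<in>K. \<Sum>l\<in>L. Poly_Mapping.lookup p m * (c k * x k ^ fst m) * (d l * y l ^ snd m))"
      by (rule sum_product)
    finally show "(\<Sum>k\<in>K. \<Sum>l\<in>L. Poly_Mapping.lookup p m * (c k * x k ^ fst m) * (d l * y l ^ snd m))
        = Poly_Mapping.lookup p m * (\<Sum>k\<in>K. c k * x k ^ fst m) * (\<Sum>l\<in>L. d l * y l ^ snd m)" ..
  qed
  finally show ?thesis .
qed

text \<open>If C annihilates x-degrees below a and D annihilates y-degrees below b, with
  C a = D b = 1, then weighting p by C and D extracts the coefficient of the leading
  monomial (a,b): every other monomial of p is not divisible by (a,b).\<close>
lemma weighted_sum_lead_coeff:
  fixes p :: "'a::comm_ring_1 bipoly"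
  assumes to: "term_order le" and p: "p \<noteq> 0" and lead: "lead_mon le p = (a,b)"
    and C: "\<And>s. s < a \<Longrightarrow> C s = 0" "C a = 1"
    and D: "\<And>t. t < b \<Longrightarrow> D t = 0" "D b = 1"
  shows "(\<Sum>m\<in>Poly_Mapping.keys p. Poly_Mapping.lookup p m * C (fst m) * D (snd m))
    = Poly_Mapping.lookup p (a,b)"
proof -
  have ab_key: "(a,b) \<in> Poly_Mapping.keys p" using lead_mon_max(1)[OF to p] lead by simp
  have others_vanish: "Poly_Mapping.lookup p (s,t) * C s * D t = 0"
    if "(s,t) \<in> Poly_Mapping.keys p" "(s,t) \<noteq> (a,b)" for s t
  proof (cases "s < a \<or> t < b")
    case True
    then show ?thesis by (elim disjE) (simp_all add: C(1) D(1))
  next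
    case False
    then have "le (a,b) (s,t)" by (intro mon_dvd_imp_le[OF to]) (simp add: mon_dvd_def)
    moreover have "le (s,t) (a,b)" using lead_mon_max(2)[OF to p that(1)] lead by simp
    ultimately show ?thesis using to_antisym[OF to] that(2) by blast
  qed
  have "(\<Sum>m\<in>Poly_Mapping.keys p. Poly_Mapping.lookup p m * C (fst m) * D (snd m))
      = (\<Sum>m\<in>{(a,b)}. Poly_Mapping.lookup p m * C (fst m) * D (snd m))"
    by (rule sum.mono_neutral_right) (use ab_key others_vanish in force)+
  then show ?thesis using C D by simp
qed

text \<open>A larger point set has a smaller vanishing ideal, hence a smaller escalier.\<close>
lemma escalier_antimono:
  assumes "Xi' \<subseteq> Xi"
  shows "escalier le Xi' \<subseteq> escalier le Xi"
proof -
  have "van_ideal Xi \<subseteq> van_ideal Xi'" using assms unfolding van_ideal_def by blast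
  then show ?thesis unfolding escalier_def by blast
qed

lemma lin_prod_degree_coeff:
  fixes x :: "nat \<Rightarrow> 'a::idom"
  shows "degree (\<Prod>k<i. [:-x k, 1:]) = i" and "coeff (\<Prod>k<i. [:-x k, 1:]) i = 1"
proof -
  have "degree (\<Prod>k<i. [:-x k, 1:]) = (\<Sum>k<i. degree [:-x k, 1:])"
    by (rule degree_prod_eq_sum_degree) auto
  then show d: "degree (\<Prod>k<i. [:-x k, 1:]) = i" by simp
  have "lead_coeff (\<Prod>k<i. [:-x k, 1:]) = 1" by (simp add: lead_coeff_prod)
  with d show "coeff (\<Prod>k<i. [:-x k, 1:]) i = 1" by simp
qed

lemma escalier_grid_subset:
  assumes to: "term_order le" and low: "lower_set A"
    and Xi: "Xi = {(x i, y j) | i j. (i, j) \<in> A}"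
  shows "escalier le (Xi :: ('a::idom \<times> 'a) set) \<subseteq> A"
proof
  fix ij assume ij: "ij \<in> escalier le Xi"
  obtain i j where ij_eq: "ij = (i,j)" by (cases ij)
  show "ij \<in> A"
  proof (rule ccontr)
    assume notA: "ij \<notin> A"
    define f where "f = (\<Prod>k<i. [:-x k, 1:])"
    define g where "g = (\<Prod>l<j. [:-y l, 1:])"
    define p where "p = bip f g"
    have ij_key: "(i,j) \<in> Poly_Mapping.keys p"
      using lin_prod_degree_coeff(2)[of x i] lin_prod_degree_coeff(2)[of y j]
      by (simp add: p_def f_def g_def in_keys_iff lookup_bip)
    have "lead_mon le p = (i,j)"
    proof (rule lead_mon_eqI[OF to ij_key], intro ballI)
      fix k assume "k \<in> Poly_Mapping.keys p"
      then have "mon_dvd k (i,j)"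
        using keys_bip[of f g] by (auto simp: p_def f_def g_def lin_prod_degree_coeff mon_dvd_def)
      then show "le k (i,j)" by (rule mon_dvd_imp_le[OF to])
    qed
    moreover have "p \<noteq> 0" using ij_key by auto
    moreover have "p \<in> van_ideal Xi"
      unfolding van_ideal_def
    proof safe
      fix u v assume "(u,v) \<in> Xi"
      then obtain k l where kl: "(k,l) \<in> A" "u = x k" "v = y l" using Xi by blast
      have "k < i \<or> l < j"
        using low kl(1) notA ij_eq unfolding lower_set_def by (meson not_less)
      then have "poly f u = 0 \<or> poly g v = 0"
        using kl by (auto simp: f_def g_def poly_prod)
      then show "bi_eval p (u,v) = 0" by (auto simp: p_def bi_eval_bip)
    qed
    ultimately show False using ij ij_eq unfolding escalier_def by (auto simp: mon_dvd_def)
  qed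
qed

lemma grid_subset_escalier:
  assumes to: "term_order le" and low: "lower_set A"
    and injx: "inj_on x (fst ` A)" and injy: "inj_on y (snd ` A)"
    and Xi: "{(x i, y j) | i j. (i, j) \<in> A} \<subseteq> (Xi :: ('a::field \<times> 'a) set)"
  shows "A \<subseteq> escalier le Xi"
proof
  fix ij assume ijA: "ij \<in> A"
  have down: "(s,t) \<in> A" if "(a,b) \<in> A" "s \<le> a" "t \<le> b" for a b s t
    using low that unfolding lower_set_def by blast
  show "ij \<in> escalier le Xi"
    unfolding escalier_def
  proof safe
    fix p assume van: "p \<in> van_ideal Xi" and p: "p \<noteq> 0" and dvd: "mon_dvd (lead_mon le p) ij"
    obtain a b where lead: "lead_mon le p = (a,b)" by (cases "lead_mon le p")
    have abA: "(a,b) \<in> A" using down ijA dvd lead by (cases ij) (auto simp: mon_dvd_def)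
    have "{..a} \<subseteq> fst ` A" using down[OF abA] by (force intro: image_eqI[of _ fst "(_, 0)"])
    then obtain c where c: "\<And>s. s \<le> a \<Longrightarrow> (\<Sum>k\<le>a. c k * x k ^ s) = (if s = a then 1 else 0)"
      using power_dual_weights inj_on_subset[OF injx] by metis
    have "{..b} \<subseteq> snd ` A" using down[OF abA] by (force intro: image_eqI[of _ snd "(0, _)"])
    then obtain d where d: "\<And>t. t \<le> b \<Longrightarrow> (\<Sum>l\<le>b. d l * y l ^ t) = (if t = b then 1 else 0)"
      using power_dual_weights inj_on_subset[OF injy] by metis
    have "(\<Sum>k\<le>a. \<Sum>l\<le>b. c k * d l * bi_eval p (x k, y l)) = 0"
    proof (intro sum.neutral ballI)
      fix k l assume "k \<in> {..a}" "l \<in> {..b}"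
      then have "(x k, y l) \<in> Xi" using down[OF abA] Xi by fastforce
      then show "c k * d l * bi_eval p (x k, y l) = 0" using van unfolding van_ideal_def by simp
    qed
    moreover have "(\<Sum>k\<le>a. \<Sum>l\<le>b. c k * d l * bi_eval p (x k, y l)) = Poly_Mapping.lookup p (a,b)"
      unfolding grid_functional_bi_eval
      by (rule weighted_sum_lead_coeff[OF to p lead]) (simp_all add: c d)
    moreover have "(a,b) \<in> Poly_Mapping.keys p" using lead_mon_max(1)[OF to p] lead by simp
    ultimately show False by (simp add: in_keys_iff)
  qed
qed

theorem mainTheorem6:
  fixes Xi Xi' :: "('a::field \<times> 'a) set"
    and le :: "nat \<times> nat \<Rightarrow> nat \<times> nat \<Rightarrow> bool"
    and A' :: "(nat \<times> nat) set"
  assumes "finite Xi"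
    and "term_order le"
    and "lower_set A'"
    and "cartesian A' Xi'"
    and "Xi' \<subseteq> Xi"
  shows "A' = escalier le Xi' \<and> escalier le Xi' \<subseteq> escalier le Xi"
proof -
  obtain x y :: "nat \<Rightarrow> 'a" where injx: "inj_on x (fst ` A')" and injy: "inj_on y (snd ` A')"
    and Xi': "Xi' = {(x i, y j) | i j. (i, j) \<in> A'}"
    using assms(4) unfolding cartesian_def by blast
  have "escalier le Xi' \<subseteq> A'"
    using escalier_grid_subset[OF assms(2,3) Xi'] .
  moreover have "A' \<subseteq> escalier le Xi'"
    using grid_subset_escalier[OF assms(2,3) injx injy] Xi' by simp
  moreover have "escalier le Xi' \<subseteq> escalier le Xi"
    using escalier_antimono[OF assms(5)] .
  ultimately show ?thesis by blast
qed

end
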